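(* Let $(X,\tau)$ be a topological space, $\delta$ a quasi-proximity compatible with $\tau$ such that $\mathcal{V}_\delta$ is transitive, and suppose $N_i\in\mathcal{B}(\mathcal{V}_\delta)$ ($i\in\mathbb{N}$) satisfy $N_i\subsetneq N_{i+1}$ and $\bigcup_{i}N_i\in\mathcal{B}(\mathcal{V}_\delta)$. For $A\subseteq\mathbb{N}$ let $\alpha_A=\{X\}\cup\{N_i:i\notin A\}$ and let $U_A$ be the relation with $U_A(x)=\bigcap\{M\in\alpha_A:x\in M\}$. For a p-filter $\sigma$ on $\mathbb{N}$ let $\mathcal{V}_\sigma$ be the filter on $X\times X$ generated by $\mathcal{V}_\delta\cup\{U_A:A\in\sigma\}$. Then each $\mathcal{V}_\sigma$ belongs to $\pi(\delta)\cap T(\tau)$, and for p-filters $\sigma_1,\sigma_2$, $\mathcal{V}_{\sigma_1}\subseteq\mathcal{V}_{\sigma_2}$ implies $\sigma_1\subseteq\sigma_2$; in particular $\sigma\mapsto\mathcal{V}_\sigma$ is injective.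
   Context: Quasi-uniformities and quasi-proximities are in the sense of Fletcher–Lindgren. $\pi(\delta)$ is the set of quasi-uniformities inducing $\delta$, $\mathcal{V}_\delta$ its coarsest element; $T(\tau)$ the set of compatible quasi-uniformities with a base of transitive entourages. For $N\subseteq X$, $U_N=(N\times N)\cup((X\setminus N)\times X)$ and $\mathcal{B}(\mathcal{V}_\delta)=\{N\in\tau:U_N\in\mathcal{V}_\delta\}$. For $N\subseteq\mathbb{N}$, an $N$-pile is a subset $H\subseteq N$ that is maximal with respect to the property: $i,j\in H$, $i<k<j$, $k\in\mathbb{N}$ imply $k\in H$. A set $Z\subseteq\mathbb{N}$ is admissible for $N$ if there is $k\in\mathbb{N}$ with $|H\cap Z|\le k$ for every $N$-pile $H$. A filter $\sigma$ on $\mathbb{N}$ is a p-filter if whenever $N\in\sigma$ and $Z$ is admissible for $N$, then $N\setminus Z\in\sigma$. *)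

theory Defs
  imports "HOL-Analysis.Abstract_Topology"
begin

text \<open>Convention: the underlying set X is the universe of the type 'a.
  Entourages are relations ('a \<times> 'a) set; U(x) is U `` {x}.\<close>

definition quasi_uniformity :: "('a \<times> 'a) set set \<Rightarrow> bool" where
  "quasi_uniformity \<U> \<longleftrightarrow>
     \<U> \<noteq> {} \<and>
     (\<forall>U\<in>\<U>. Id \<subseteq> U) \<and>
     (\<forall>U V. U \<in> \<U> \<longrightarrow> U \<subseteq> V \<longrightarrow> V \<in> \<U>) \<and>
     (\<forall>U V. U \<in> \<U> \<longrightarrow> V \<in> \<U> \<longrightarrow> U \<inter> V \<in> \<U>) \<and>
     (\<forall>U\<in>\<U>. \<exists>V\<in>\<U>. V O V \<subseteq> U)"

definition qu_compatible :: "('a \<times> 'a) set set \<Rightarrow> 'a topology \<Rightarrow> bool" where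
  "qu_compatible \<U> \<tau> \<longleftrightarrow>
     (\<forall>G. openin \<tau> G \<longleftrightarrow> (\<forall>x\<in>G. \<exists>U\<in>\<U>. U `` {x} \<subseteq> G))"

definition transitive_qu :: "('a \<times> 'a) set set \<Rightarrow> bool" where
  "transitive_qu \<U> \<longleftrightarrow> (\<forall>U\<in>\<U>. \<exists>V\<in>\<U>. V \<subseteq> U \<and> trans V)"

definition quasi_proximity :: "('a set \<Rightarrow> 'a set \<Rightarrow> bool) \<Rightarrow> bool" where
  "quasi_proximity \<delta> \<longleftrightarrow>
     (\<forall>A. \<not> \<delta> A {} \<and> \<not> \<delta> {} A) \<and>
     (\<forall>A B C. \<delta> A (B \<union> C) \<longleftrightarrow> \<delta> A B \<or> \<delta> A C) \<and>
     (\<forall>A B C. \<delta> (A \<union> B) C \<longleftrightarrow> \<delta> A C \<or> \<delta> B C) \<and>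
     (\<forall>x. \<delta> {x} {x}) \<and>
     (\<forall>A B. \<not> \<delta> A B \<longrightarrow> (\<exists>C. \<not> \<delta> A C \<and> \<not> \<delta> (- C) B))"

definition qp_compatible :: "('a set \<Rightarrow> 'a set \<Rightarrow> bool) \<Rightarrow> 'a topology \<Rightarrow> bool" where
  "qp_compatible \<delta> \<tau> \<longleftrightarrow> (\<forall>G. openin \<tau> G \<longleftrightarrow> (\<forall>x\<in>G. \<not> \<delta> {x} (- G)))"

definition qu_proximity :: "('a \<times> 'a) set set \<Rightarrow> 'a set \<Rightarrow> 'a set \<Rightarrow> bool" where
  "qu_proximity \<U> A B \<longleftrightarrow> (\<forall>U\<in>\<U>. U `` A \<inter> B \<noteq> {})"

definition pi_qp :: "('a set \<Rightarrow> 'a set \<Rightarrow> bool) \<Rightarrow> ('a \<times> 'a) set set set" where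
  "pi_qp \<delta> = {\<U>. quasi_uniformity \<U> \<and> qu_proximity \<U> = \<delta>}"

definition V_qp :: "('a set \<Rightarrow> 'a set \<Rightarrow> bool) \<Rightarrow> ('a \<times> 'a) set set" where
  "V_qp \<delta> = (THE \<U>. \<U> \<in> pi_qp \<delta> \<and> (\<forall>\<W>\<in>pi_qp \<delta>. \<U> \<subseteq> \<W>))"

definition T_top :: "'a topology \<Rightarrow> ('a \<times> 'a) set set set" where
  "T_top \<tau> = {\<U>. quasi_uniformity \<U> \<and> qu_compatible \<U> \<tau> \<and> transitive_qu \<U>}"

definition U_set :: "'a set \<Rightarrow> ('a \<times> 'a) set" where
  "U_set N = (N \<times> N) \<union> ((- N) \<times> UNIV)"

definition B_qu :: "'a topology \<Rightarrow> ('a \<times> 'a) set set \<Rightarrow> 'a set set" where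
  "B_qu \<tau> \<V> = {N. openin \<tau> N \<and> U_set N \<in> \<V>}"

definition gen_filter :: "('a \<times> 'a) set set \<Rightarrow> ('a \<times> 'a) set set" where
  "gen_filter S = {W. \<exists>F. finite F \<and> F \<subseteq> S \<and> \<Inter>F \<subseteq> W}"

definition nat_convex :: "nat set \<Rightarrow> bool" where
  "nat_convex H \<longleftrightarrow> (\<forall>i j k. i \<in> H \<longrightarrow> j \<in> H \<longrightarrow> i < k \<longrightarrow> k < j \<longrightarrow> k \<in> H)"

definition pile :: "nat set \<Rightarrow> nat set \<Rightarrow> bool" where
  "pile N H \<longleftrightarrow> H \<subseteq> N \<and> nat_convex H \<and>
     (\<forall>H'. H \<subseteq> H' \<and> H' \<subseteq> N \<and> nat_convex H' \<longrightarrow> H' = H)"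

definition admissible :: "nat set \<Rightarrow> nat set \<Rightarrow> bool" where
  "admissible N Z \<longleftrightarrow> (\<exists>k::nat. \<forall>H. pile N H \<longrightarrow> finite (H \<inter> Z) \<and> card (H \<inter> Z) \<le> k)"

definition nat_filter :: "nat set set \<Rightarrow> bool" where
  "nat_filter \<sigma> \<longleftrightarrow> UNIV \<in> \<sigma> \<and> {} \<notin> \<sigma> \<and>
     (\<forall>A B. A \<in> \<sigma> \<longrightarrow> A \<subseteq> B \<longrightarrow> B \<in> \<sigma>) \<and>
     (\<forall>A B. A \<in> \<sigma> \<longrightarrow> B \<in> \<sigma> \<longrightarrow> A \<inter> B \<in> \<sigma>)"

definition p_filter :: "nat set set \<Rightarrow> bool" where
  "p_filter \<sigma> \<longleftrightarrow> nat_filter \<sigma> \<and>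
     (\<forall>N\<in>\<sigma>. \<forall>Z. admissible N Z \<longrightarrow> N - Z \<in> \<sigma>)"

definition alpha_fam :: "(nat \<Rightarrow> 'a set) \<Rightarrow> nat set \<Rightarrow> 'a set set" where
  "alpha_fam N A = insert UNIV {N i | i. i \<notin> A}"

definition U_rel :: "(nat \<Rightarrow> 'a set) \<Rightarrow> nat set \<Rightarrow> ('a \<times> 'a) set" where
  "U_rel N A = {(x, y). y \<in> \<Inter>{M \<in> alpha_fam N A. x \<in> M}}"

definition V_sigma :: "('a set \<Rightarrow> 'a set \<Rightarrow> bool) \<Rightarrow> (nat \<Rightarrow> 'a set) \<Rightarrow> nat set set \<Rightarrow> ('a \<times> 'a) set set" where
  "V_sigma \<delta> N \<sigma> = gen_filter (V_qp \<delta> \<union> {U_rel N A | A. A \<in> \<sigma>})"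

end

theory Submission
  imports Defs
begin

text \<open>
  The coarsest quasi-uniformity inducing \<open>\<delta>\<close> is generated by the Pervin entourages
  \<open>(-P \<times> X) \<union> (X \<times> -Q)\<close> with \<open>P\<close> far from \<open>Q\<close>. Every relation \<open>R\<close> that only separates
  far sets keeps this property after intersecting with a Pervin entourage; the relations
  \<open>U\<^sub>A\<close> have this property because each \<open>U\<^sub>A(x)\<close> is \<open>X\<close> or some \<open>N\<^sub>j\<close>, and a union of an
  initial segment of the chain \<open>N\<^sub>j\<close> is far from its complement. Hence \<open>\<V>\<^sub>\<sigma>\<close> induces \<open>\<delta>\<close>,
  and it is transitive because the \<open>U\<^sub>A\<close> are.

  For injectivity, suppose \<open>U\<^sub>A \<in> \<V>\<^sub>\<sigma>\<close>, so \<open>R \<inter> U\<^sub>B \<subseteq> U\<^sub>A\<close> for some \<open>B \<in> \<sigma>\<close> and a finite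
  intersection \<open>R\<close> of Pervin entourages. Such an \<open>R\<close> has only finitely many distinct images
  \<open>R(x)\<close>, whereas points entering the chain at different indices \<open>i < j\<close> of \<open>B - A\<close> lying
  in one \<open>B\<close>-pile must have different \<open>R\<close>-images. So \<open>B - A\<close> is admissible for \<open>B\<close>, and
  the p-filter property gives \<open>B - (B - A) \<subseteq> A\<close> in \<open>\<sigma>\<close>.
\<close>

section \<open>Generated filters of relations\<close>

lemma gen_filter_subbase: "s \<in> S \<Longrightarrow> s \<in> gen_filter S"
  unfolding gen_filter_def by (intro CollectI exI[of _ "{s}"]) auto

lemma gen_filter_UNIV: "UNIV \<in> gen_filter S"
  unfolding gen_filter_def by (intro CollectI exI[of _ "{}"]) auto

lemma gen_filter_upclosed: "W \<in> gen_filter S \<Longrightarrow> W \<subseteq> W' \<Longrightarrow> W' \<in> gen_filter S"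
  unfolding gen_filter_def by blast

lemma gen_filterE:
  assumes "W \<in> gen_filter S"
  obtains F where "finite F" "F \<subseteq> S" "\<Inter>F \<subseteq> W"
  using assms unfolding gen_filter_def mem_Collect_eq by (elim exE conjE) (rule that)

lemma gen_filter_Int:
  assumes "W1 \<in> gen_filter S" "W2 \<in> gen_filter S"
  shows "W1 \<inter> W2 \<in> gen_filter S"
proof -
  obtain F1 where "finite F1" "F1 \<subseteq> S" "\<Inter>F1 \<subseteq> W1"
    using assms(1) by (rule gen_filterE)
  moreover obtain F2 where "finite F2" "F2 \<subseteq> S" "\<Inter>F2 \<subseteq> W2"
    using assms(2) by (rule gen_filterE)
  ultimately show ?thesis
    unfolding gen_filter_def by (intro CollectI exI[of _ "F1 \<union> F2"]) auto
qed

lemma quasi_uniformity_refl: "quasi_uniformity \<U> \<Longrightarrow> U \<in> \<U> \<Longrightarrow> Id \<subseteq> U"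
  unfolding quasi_uniformity_def by metis

lemma quasi_uniformity_upclosed: "quasi_uniformity \<U> \<Longrightarrow> U \<in> \<U> \<Longrightarrow> U \<subseteq> V \<Longrightarrow> V \<in> \<U>"
  unfolding quasi_uniformity_def by metis

lemma quasi_uniformity_Int: "quasi_uniformity \<U> \<Longrightarrow> U \<in> \<U> \<Longrightarrow> V \<in> \<U> \<Longrightarrow> U \<inter> V \<in> \<U>"
  unfolding quasi_uniformity_def by metis

lemma quasi_uniformity_root: "quasi_uniformity \<U> \<Longrightarrow> U \<in> \<U> \<Longrightarrow> \<exists>V\<in>\<U>. V O V \<subseteq> U"
  unfolding quasi_uniformity_def by metis

lemma quasi_uniformity_UNIV: "quasi_uniformity \<U> \<Longrightarrow> UNIV \<in> \<U>"
  unfolding quasi_uniformity_def by (metis all_not_in_conv top_greatest)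

lemma quasi_uniformity_Inter:
  assumes "quasi_uniformity \<U>" "finite F" "F \<subseteq> \<U>"
  shows "\<Inter>F \<in> \<U>"
  using assms(2,3)
  by (induction F rule: finite_induct)
     (simp_all add: quasi_uniformity_UNIV[OF assms(1)] quasi_uniformity_Int[OF assms(1)])

lemma gen_filter_least:
  assumes "quasi_uniformity \<U>" "S \<subseteq> \<U>"
  shows "gen_filter S \<subseteq> \<U>"
proof
  fix W assume "W \<in> gen_filter S"
  then obtain F where "finite F" "F \<subseteq> S" "\<Inter>F \<subseteq> W"
    by (rule gen_filterE)
  then have "\<Inter>F \<in> \<U>" using assms quasi_uniformity_Inter by blast
  then show "W \<in> \<U>" using \<open>\<Inter>F \<subseteq> W\<close> quasi_uniformity_upclosed[OF assms(1)] by blast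
qed

lemma quasi_uniformity_gen_filter:
  assumes refl: "\<And>s. s \<in> S \<Longrightarrow> Id \<subseteq> s"
    and root: "\<And>s. s \<in> S \<Longrightarrow> \<exists>V\<in>gen_filter S. V O V \<subseteq> s"
  shows "quasi_uniformity (gen_filter S)"
proof -
  have Inter_root: "\<exists>V\<in>gen_filter S. V O V \<subseteq> \<Inter>F" if "finite F" "F \<subseteq> S" for F
    using that
  proof (induction F rule: finite_induct)
    case empty
    then show ?case using gen_filter_UNIV by blast
  next
    case (insert s F)
    then have "s \<in> S" "F \<subseteq> S" by simp_all
    obtain V1 where V1: "V1 \<in> gen_filter S" "V1 O V1 \<subseteq> s"
      using root[OF \<open>s \<in> S\<close>] by blast
    obtain V2 where V2: "V2 \<in> gen_filter S" "V2 O V2 \<subseteq> \<Inter>F"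
      using insert.IH[OF \<open>F \<subseteq> S\<close>] by blast
    have "(V1 \<inter> V2) O (V1 \<inter> V2) \<subseteq> V1 O V1" "(V1 \<inter> V2) O (V1 \<inter> V2) \<subseteq> V2 O V2"
      by (intro relcomp_mono; simp)+
    then have "(V1 \<inter> V2) O (V1 \<inter> V2) \<subseteq> s \<inter> \<Inter>F"
      using V1(2) V2(2) by (meson Int_greatest order_trans)
    then show ?case by (intro bexI[OF _ gen_filter_Int[OF V1(1) V2(1)]]) simp
  qed
  have Id: "Id \<subseteq> W" if W: "W \<in> gen_filter S" for W
  proof -
    obtain F where "finite F" "F \<subseteq> S" "\<Inter>F \<subseteq> W"
      using W by (rule gen_filterE)
    then show ?thesis using refl by blast
  qed
  have W_root: "\<exists>V\<in>gen_filter S. V O V \<subseteq> W" if W: "W \<in> gen_filter S" for W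
  proof -
    obtain F where "finite F" "F \<subseteq> S" "\<Inter>F \<subseteq> W"
      using W by (rule gen_filterE)
    then show ?thesis using Inter_root by (meson order_trans)
  qed
  show ?thesis
    unfolding quasi_uniformity_def
  proof (intro conjI allI impI ballI)
    show "gen_filter S \<noteq> {}" using gen_filter_UNIV[of S] by auto
  qed (fact Id W_root gen_filter_upclosed gen_filter_Int)+
qed

lemma quasi_uniformity_gen_filter_Un_trans:
  assumes "quasi_uniformity \<U>" and S: "\<And>R. R \<in> S \<Longrightarrow> Id \<subseteq> R \<and> trans R"
  shows "quasi_uniformity (gen_filter (\<U> \<union> S))"
proof (rule quasi_uniformity_gen_filter)
  fix s assume s: "s \<in> \<U> \<union> S"
  then show "Id \<subseteq> s"
    using S quasi_uniformity_refl[OF assms(1)] by blast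
  show "\<exists>V\<in>gen_filter (\<U> \<union> S). V O V \<subseteq> s"
  proof (cases "s \<in> S")
    case True
    then have "s O s \<subseteq> s" using S trans_O_subset by blast
    then show ?thesis using gen_filter_subbase[OF s] by blast
  next
    case False
    then obtain V where "V \<in> \<U>" "V O V \<subseteq> s"
      using s quasi_uniformity_root[OF assms(1)] by blast
    then show ?thesis using gen_filter_subbase[of V "\<U> \<union> S"] by blast
  qed
qed

lemma gen_filter_Un_downward_directed:
  assumes "quasi_uniformity \<U>" "S \<noteq> {}"
    and directed: "\<And>R1 R2. R1 \<in> S \<Longrightarrow> R2 \<in> S \<Longrightarrow> \<exists>R\<in>S. R \<subseteq> R1 \<inter> R2"
    and W: "W \<in> gen_filter (\<U> \<union> S)"
  shows "\<exists>V\<in>\<U>. \<exists>R\<in>S. V \<inter> R \<subseteq> W"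
proof -
  obtain F where F: "finite F" "F \<subseteq> \<U> \<union> S" "\<Inter>F \<subseteq> W"
    using W by (rule gen_filterE)
  have "\<exists>V\<in>\<U>. \<exists>R\<in>S. V \<inter> R \<subseteq> \<Inter>F"
    using F(1,2)
  proof (induction F rule: finite_induct)
    case empty
    then show ?case using quasi_uniformity_UNIV[OF assms(1)] assms(2) by blast
  next
    case (insert s F)
    then obtain V R where VR: "V \<in> \<U>" "R \<in> S" "V \<inter> R \<subseteq> \<Inter>F" by blast
    show ?case
    proof (cases "s \<in> \<U>")
      case True
      then have "V \<inter> s \<in> \<U>" using VR(1) quasi_uniformity_Int[OF assms(1)] by blast
      then show ?thesis using VR by blast
    next
      case False
      then have "s \<in> S" using insert.prems by blast
      then obtain R' where "R' \<in> S" "R' \<subseteq> R \<inter> s" using directed VR(2) by blast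
      then show ?thesis using VR by blast
    qed
  qed
  then show ?thesis using F(3) by blast
qed

section \<open>The coarsest quasi-uniformity inducing a quasi-proximity\<close>

lemma quasi_proximity_mono:
  assumes "quasi_proximity \<delta>" "\<delta> A B" "A \<subseteq> A'" "B \<subseteq> B'"
  shows "\<delta> A' B'"
proof -
  have "\<delta> (A \<union> A') (B \<union> B')"
    using assms(1,2) unfolding quasi_proximity_def by blast
  then show ?thesis using assms(3,4) by (simp add: Un_absorb1)
qed

lemma quasi_proximity_empty:
  assumes "quasi_proximity \<delta>"
  shows "\<not> \<delta> A {}" "\<not> \<delta> {} A"
  using assms unfolding quasi_proximity_def by blast+

lemma quasi_proximity_Un_left: "quasi_proximity \<delta> \<Longrightarrow> \<delta> (A \<union> B) C \<longleftrightarrow> \<delta> A C \<or> \<delta> B C"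
  unfolding quasi_proximity_def by blast

lemma quasi_proximity_Un_right: "quasi_proximity \<delta> \<Longrightarrow> \<delta> A (B \<union> C) \<longleftrightarrow> \<delta> A B \<or> \<delta> A C"
  unfolding quasi_proximity_def by blast

lemma quasi_proximity_far_disjoint:
  assumes "quasi_proximity \<delta>" "\<not> \<delta> A B"
  shows "A \<inter> B = {}"
proof (rule ccontr)
  assume "A \<inter> B \<noteq> {}"
  then obtain x where "x \<in> A" "x \<in> B" by blast
  moreover have "\<delta> {x} {x}" using assms(1) unfolding quasi_proximity_def by blast
  ultimately show False
    using quasi_proximity_mono[OF assms(1), of "{x}" "{x}" A B] assms(2) by blast
qed

definition pervin_entourage :: "'a set \<Rightarrow> 'a set \<Rightarrow> ('a \<times> 'a) set" where
  "pervin_entourage P Q = ((- P) \<times> UNIV) \<union> (UNIV \<times> (- Q))"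

definition pervin_subbase :: "('a set \<Rightarrow> 'a set \<Rightarrow> bool) \<Rightarrow> ('a \<times> 'a) set set" where
  "pervin_subbase \<delta> = {pervin_entourage P Q | P Q. \<not> \<delta> P Q}"

lemma Image_pervin_entourage:
  "pervin_entourage P Q `` {x} = (if x \<in> P then - Q else UNIV)"
  by (auto simp: pervin_entourage_def)

lemma pervin_entourage_relcomp:
  "(pervin_entourage P C \<inter> pervin_entourage (- C) Q) O (pervin_entourage P C \<inter> pervin_entourage (- C) Q)
    \<subseteq> pervin_entourage P Q"
proof
  fix p assume "p \<in> (pervin_entourage P C \<inter> pervin_entourage (- C) Q)
      O (pervin_entourage P C \<inter> pervin_entourage (- C) Q)"
  then obtain x y z where "p = (x, z)" "(x, y) \<in> pervin_entourage P C" "(y, z) \<in> pervin_entourage (- C) Q"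
    by blast
  then show "p \<in> pervin_entourage P Q" unfolding pervin_entourage_def by auto
qed

lemma Id_subset_pervin_subbase:
  "quasi_proximity \<delta> \<Longrightarrow> s \<in> pervin_subbase \<delta> \<Longrightarrow> Id \<subseteq> s"
  unfolding pervin_subbase_def pervin_entourage_def
  by (auto dest: quasi_proximity_far_disjoint)

lemma quasi_uniformity_pervin:
  assumes qp: "quasi_proximity \<delta>"
  shows "quasi_uniformity (gen_filter (pervin_subbase \<delta>))"
proof (rule quasi_uniformity_gen_filter)
  fix s assume "s \<in> pervin_subbase \<delta>"
  then show "Id \<subseteq> s" by (rule Id_subset_pervin_subbase[OF qp])
  from \<open>s \<in> pervin_subbase \<delta>\<close> obtain P Q where s: "s = pervin_entourage P Q" "\<not> \<delta> P Q"
    unfolding pervin_subbase_def by blast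
  then obtain C where "\<not> \<delta> P C" "\<not> \<delta> (- C) Q"
    using qp unfolding quasi_proximity_def by metis
  then have "pervin_entourage P C \<inter> pervin_entourage (- C) Q \<in> gen_filter (pervin_subbase \<delta>)"
    by (intro gen_filter_Int gen_filter_subbase) (auto simp: pervin_subbase_def)
  moreover have "(pervin_entourage P C \<inter> pervin_entourage (- C) Q)
      O (pervin_entourage P C \<inter> pervin_entourage (- C) Q) \<subseteq> s"
    unfolding s(1) by (rule pervin_entourage_relcomp)
  ultimately show "\<exists>V\<in>gen_filter (pervin_subbase \<delta>). V O V \<subseteq> s" by blast
qed

definition far_if_separated :: "('a set \<Rightarrow> 'a set \<Rightarrow> bool) \<Rightarrow> ('a \<times> 'a) set \<Rightarrow> bool" where
  "far_if_separated \<delta> R \<longleftrightarrow> (\<forall>P Q. R `` P \<inter> Q = {} \<longrightarrow> \<not> \<delta> P Q)"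

lemma far_if_separated_mono:
  "far_if_separated \<delta> R \<Longrightarrow> R \<subseteq> R' \<Longrightarrow> far_if_separated \<delta> R'"
  unfolding far_if_separated_def by blast

lemma far_if_separated_UNIV:
  assumes "quasi_proximity \<delta>"
  shows "far_if_separated \<delta> UNIV"
  unfolding far_if_separated_def
proof (intro allI impI)
  fix P Q :: "'a set" assume "UNIV `` P \<inter> Q = {}"
  then have "P = {} \<or> Q = {}" by auto
  then show "\<not> \<delta> P Q" using quasi_proximity_empty[OF assms] by auto
qed

lemma far_if_separated_Int_pervin:
  assumes qp: "quasi_proximity \<delta>" and far: "\<not> \<delta> P0 Q0" and R: "far_if_separated \<delta> R"
  shows "far_if_separated \<delta> (pervin_entourage P0 Q0 \<inter> R)"
  unfolding far_if_separated_def
proof (intro allI impI)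
  fix P Q assume sep: "(pervin_entourage P0 Q0 \<inter> R) `` P \<inter> Q = {}"
  have "R `` (P - P0) \<inter> Q = {}" "R `` (P \<inter> P0) \<inter> (Q - Q0) = {}"
    using sep unfolding pervin_entourage_def by blast+
  then have "\<not> \<delta> (P - P0) Q" "\<not> \<delta> (P \<inter> P0) (Q - Q0)"
    using R unfolding far_if_separated_def by blast+
  moreover have "\<not> \<delta> (P \<inter> P0) (Q \<inter> Q0)"
    using quasi_proximity_mono[OF qp _ Int_lower2 Int_lower2] far by blast
  ultimately have "\<not> \<delta> (P \<inter> P0) ((Q - Q0) \<union> (Q \<inter> Q0))"
    by (simp add: quasi_proximity_Un_right[OF qp])
  then have "\<not> \<delta> (P \<inter> P0) Q" by (simp add: Un_Diff_Int)
  with \<open>\<not> \<delta> (P - P0) Q\<close> have "\<not> \<delta> ((P - P0) \<union> (P \<inter> P0)) Q"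
    by (simp add: quasi_proximity_Un_left[OF qp])
  then show "\<not> \<delta> P Q" by (simp add: Un_Diff_Int)
qed

lemma far_if_separated_gen_filter_pervin:
  assumes qp: "quasi_proximity \<delta>" and R: "far_if_separated \<delta> R"
    and W: "W \<in> gen_filter (pervin_subbase \<delta>)"
  shows "far_if_separated \<delta> (W \<inter> R)"
proof -
  obtain F where F: "finite F" "F \<subseteq> pervin_subbase \<delta>" "\<Inter>F \<subseteq> W"
    using W by (rule gen_filterE)
  have "far_if_separated \<delta> (\<Inter>F \<inter> R)"
    using F(1,2)
  proof (induction F rule: finite_induct)
    case empty
    then show ?case using R by simp
  next
    case (insert s F)
    then obtain P Q where s: "s = pervin_entourage P Q" "\<not> \<delta> P Q"
      unfolding pervin_subbase_def by blast
    have "far_if_separated \<delta> (pervin_entourage P Q \<inter> (\<Inter>F \<inter> R))"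
      using far_if_separated_Int_pervin[OF qp s(2)] insert by blast
    then show ?case unfolding s(1) Inter_insert Int_assoc .
  qed
  then show ?thesis using F(3) far_if_separated_mono by blast
qed

lemma qu_proximity_eqI:
  assumes "pervin_subbase \<delta> \<subseteq> \<U>" "\<And>W. W \<in> \<U> \<Longrightarrow> far_if_separated \<delta> W"
  shows "qu_proximity \<U> = \<delta>"
proof (intro ext iffI)
  fix P Q assume "qu_proximity \<U> P Q"
  moreover have "pervin_entourage P Q `` P \<inter> Q = {}"
    unfolding pervin_entourage_def by blast
  ultimately show "\<delta> P Q"
    using assms(1) unfolding qu_proximity_def pervin_subbase_def by blast
next
  fix P Q assume "\<delta> P Q"
  then show "qu_proximity \<U> P Q"
    using assms(2) unfolding qu_proximity_def far_if_separated_def by blast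
qed

lemma pervin_least:
  assumes "\<U> \<in> pi_qp \<delta>"
  shows "gen_filter (pervin_subbase \<delta>) \<subseteq> \<U>"
proof (rule gen_filter_least)
  show qu: "quasi_uniformity \<U>" using assms unfolding pi_qp_def by blast
  show "pervin_subbase \<delta> \<subseteq> \<U>"
  proof
    fix s assume "s \<in> pervin_subbase \<delta>"
    then obtain P Q where s: "s = pervin_entourage P Q" "\<not> \<delta> P Q"
      unfolding pervin_subbase_def by blast
    then obtain U where "U \<in> \<U>" "U `` P \<inter> Q = {}"
      using assms unfolding pi_qp_def qu_proximity_def by auto
    moreover from this have "U \<subseteq> s" unfolding s(1) pervin_entourage_def by auto
    ultimately show "s \<in> \<U>" using quasi_uniformity_upclosed[OF qu] by blast
  qed
qed

lemma pervin_in_pi_qp: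
  assumes qp: "quasi_proximity \<delta>"
  shows "gen_filter (pervin_subbase \<delta>) \<in> pi_qp \<delta>"
proof -
  have "qu_proximity (gen_filter (pervin_subbase \<delta>)) = \<delta>"
  proof (rule qu_proximity_eqI)
    show "pervin_subbase \<delta> \<subseteq> gen_filter (pervin_subbase \<delta>)"
      using gen_filter_subbase by blast
    fix W assume "W \<in> gen_filter (pervin_subbase \<delta>)"
    then show "far_if_separated \<delta> W"
      using far_if_separated_gen_filter_pervin[OF qp far_if_separated_UNIV[OF qp]] by simp
  qed
  with quasi_uniformity_pervin[OF qp] show ?thesis
    unfolding pi_qp_def by (intro CollectI conjI)
qed

lemma V_qp_eq_pervin:
  assumes "quasi_proximity \<delta>"
  shows "V_qp \<delta> = gen_filter (pervin_subbase \<delta>)"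
  unfolding V_qp_def
proof (rule the_equality)
  show "gen_filter (pervin_subbase \<delta>) \<in> pi_qp \<delta>
      \<and> (\<forall>\<W>\<in>pi_qp \<delta>. gen_filter (pervin_subbase \<delta>) \<subseteq> \<W>)"
    by (intro conjI ballI pervin_in_pi_qp[OF assms] pervin_least)
  fix \<U> assume "\<U> \<in> pi_qp \<delta> \<and> (\<forall>\<W>\<in>pi_qp \<delta>. \<U> \<subseteq> \<W>)"
  then have "\<U> \<subseteq> gen_filter (pervin_subbase \<delta>)" "gen_filter (pervin_subbase \<delta>) \<subseteq> \<U>"
    using pervin_in_pi_qp[OF assms] pervin_least by blast+
  then show "\<U> = gen_filter (pervin_subbase \<delta>)" by (rule antisym)
qed

lemma quasi_uniformity_V_qp: "quasi_proximity \<delta> \<Longrightarrow> quasi_uniformity (V_qp \<delta>)"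
  unfolding V_qp_eq_pervin by (rule quasi_uniformity_pervin)

lemma qu_proximity_V_qp:
  assumes "quasi_proximity \<delta>"
  shows "qu_proximity (V_qp \<delta>) = \<delta>"
  using pervin_in_pi_qp[OF assms] unfolding V_qp_eq_pervin[OF assms] pi_qp_def mem_Collect_eq
  by (rule conjunct2)

lemma finite_range_Image_Int:
  assumes "finite (range (\<lambda>x. R `` {x}))" "finite (range (\<lambda>x. S `` {x}))"
  shows "finite (range (\<lambda>x. (R \<inter> S) `` {x}))"
proof -
  have "range (\<lambda>x. (R \<inter> S) `` {x})
      \<subseteq> (\<lambda>(A, B). A \<inter> B) ` (range (\<lambda>x. R `` {x}) \<times> range (\<lambda>x. S `` {x}))"
    by auto
  then show ?thesis using assms by (meson finite_SigmaI finite_imageI finite_subset)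
qed

lemma V_qp_finite_image_base:
  assumes qp: "quasi_proximity \<delta>" and V: "V \<in> V_qp \<delta>"
  obtains R where "R \<subseteq> V" "Id \<subseteq> R" "finite (range (\<lambda>x. R `` {x}))"
proof -
  obtain F where F: "finite F" "F \<subseteq> pervin_subbase \<delta>" "\<Inter>F \<subseteq> V"
    using V unfolding V_qp_eq_pervin[OF qp] by (rule gen_filterE)
  have "finite (range (\<lambda>x. (\<Inter>F) `` {x}))"
    using F(1,2)
  proof (induction F rule: finite_induct)
    case empty
    show ?case by (rule finite_subset[of _ "{UNIV}"]) auto
  next
    case (insert s F)
    then obtain P Q where "s = pervin_entourage P Q"
      unfolding pervin_subbase_def by blast
    then have "range (\<lambda>x. s `` {x}) \<subseteq> {- Q, UNIV}"
      by (auto simp: Image_pervin_entourage)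
    then have "finite (range (\<lambda>x. s `` {x}))" by (rule finite_subset) simp
    then show ?case using finite_range_Image_Int insert by simp
  qed
  moreover have "Id \<subseteq> \<Inter>F"
    using F(2) Id_subset_pervin_subbase[OF qp] by blast
  ultimately show ?thesis using that F(3) by blast
qed

lemma far_compl_if_mem_B_qu:
  assumes "quasi_proximity \<delta>" "M \<in> B_qu \<tau> (V_qp \<delta>)"
  shows "\<not> \<delta> M (- M)"
proof -
  have "U_set M \<in> V_qp \<delta>"
    using assms(2) unfolding B_qu_def by simp
  moreover have "U_set M `` M \<inter> - M = {}"
    unfolding U_set_def by blast
  ultimately have "\<not> qu_proximity (V_qp \<delta>) M (- M)"
    unfolding qu_proximity_def by blast
  then show ?thesis by (simp add: qu_proximity_V_qp[OF assms(1)])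
qed

lemma qu_compatible_if_qu_proximity_eq:
  assumes "qu_proximity \<U> = \<delta>" "qp_compatible \<delta> \<tau>"
  shows "qu_compatible \<U> \<tau>"
proof -
  have "\<not> \<delta> {x} (- G) \<longleftrightarrow> (\<exists>U\<in>\<U>. U `` {x} \<subseteq> G)" for x G
    unfolding assms(1)[symmetric] qu_proximity_def by blast
  then show ?thesis
    using assms(2) unfolding qu_compatible_def qp_compatible_def by simp
qed

section \<open>The relations \<open>U\<^sub>A\<close>\<close>

lemma Image_U_rel: "U_rel N C `` {x} = \<Inter>{M \<in> alpha_fam N C. x \<in> M}"
  unfolding U_rel_def by auto

lemma refl_U_rel: "Id \<subseteq> U_rel N C"
  unfolding U_rel_def by auto

lemma trans_U_rel: "trans (U_rel N C)"
  unfolding trans_def U_rel_def by blast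

lemma U_rel_mono: "C \<subseteq> C' \<Longrightarrow> U_rel N C \<subseteq> U_rel N C'"
  unfolding U_rel_def alpha_fam_def by blast

lemma Image_U_rel_subset: "i \<notin> C \<Longrightarrow> x \<in> N i \<Longrightarrow> U_rel N C `` {x} \<subseteq> N i"
  unfolding Image_U_rel alpha_fam_def by blast

lemma Image_U_rel_cases:
  fixes N :: "nat \<Rightarrow> 'a set"
  assumes "mono N"
  shows "U_rel N C `` {x} = UNIV \<or> (\<exists>j. j \<notin> C \<and> x \<in> N j \<and> U_rel N C `` {x} = N j)"
proof (cases "\<exists>i. i \<notin> C \<and> x \<in> N i")
  case True
  define j where "j = (LEAST i. i \<notin> C \<and> x \<in> N i)"
  have j: "j \<notin> C" "x \<in> N j"
    using LeastI_ex[OF True] unfolding j_def by auto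
  have "N j \<subseteq> M" if M: "M \<in> alpha_fam N C" "x \<in> M" for M
  proof -
    consider "M = UNIV" | i where "M = N i" "i \<notin> C"
      using M(1) unfolding alpha_fam_def by blast
    then show ?thesis
    proof cases
      case 2
      then have "j \<le> i" unfolding j_def using M(2) by (intro Least_le) simp
      then show ?thesis using 2 assms by (simp add: monoD)
    qed simp
  qed
  then have "U_rel N C `` {x} = N j"
    using Image_U_rel_subset[of j C x N] j unfolding Image_U_rel by blast
  then show ?thesis using j by blast
next
  case False
  then have "U_rel N C `` {x} = UNIV"
    unfolding Image_U_rel alpha_fam_def by auto
  then show ?thesis by blast
qed

lemma Union_initial_segment_cases:
  fixes N :: "nat \<Rightarrow> 'a set"
  assumes "mono N" and down: "\<And>i j. j \<in> J \<Longrightarrow> i \<le> j \<Longrightarrow> i \<in> J"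
  shows "(\<Union>j\<in>J. N j) = {} \<or> (\<Union>j\<in>J. N j) = (\<Union>j. N j) \<or> (\<exists>m. (\<Union>j\<in>J. N j) = N m)"
proof (cases "J = UNIV \<or> J = {}")
  case False
  then obtain m where "m \<notin> J" "J \<noteq> {}" by blast
  then have "J \<subseteq> {..<m}" using down not_le by blast
  then have "finite J" using finite_subset by blast
  have "(\<Union>j\<in>J. N j) = N (Max J)"
  proof
    show "(\<Union>j\<in>J. N j) \<subseteq> N (Max J)"
      using Max_ge[OF \<open>finite J\<close>] monoD[OF assms(1)] by blast
    show "N (Max J) \<subseteq> (\<Union>j\<in>J. N j)"
      using Max_in[OF \<open>finite J\<close> \<open>J \<noteq> {}\<close>] by blast
  qed
  then show ?thesis by blast
qed auto

lemma far_if_separated_U_rel: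
  fixes N :: "nat \<Rightarrow> 'a set"
  assumes qp: "quasi_proximity \<delta>" and "mono N"
    and far_N: "\<And>j. \<not> \<delta> (N j) (- N j)"
    and far_Union: "\<not> \<delta> (\<Union>j. N j) (- (\<Union>j. N j))"
  shows "far_if_separated \<delta> (U_rel N C)"
  unfolding far_if_separated_def
proof (intro allI impI)
  fix P Q assume sep: "U_rel N C `` P \<inter> Q = {}"
  show "\<not> \<delta> P Q"
  proof (cases "Q = {}")
    case False
    define K where "K = (\<Union>j\<in>{j. N j \<inter> Q = {}}. N j)"
    have "P \<subseteq> K"
    proof
      fix x assume "x \<in> P"
      then have "U_rel N C `` {x} \<inter> Q = {}" using sep by blast
      then obtain j where "x \<in> N j" "N j \<inter> Q = {}"
        using Image_U_rel_cases[OF \<open>mono N\<close>, of C x] False by auto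
      then show "x \<in> K" unfolding K_def by blast
    qed
    moreover have "Q \<subseteq> - K" unfolding K_def by blast
    moreover have "K = {} \<or> K = (\<Union>j. N j) \<or> (\<exists>m. K = N m)"
      unfolding K_def using \<open>mono N\<close> by (intro Union_initial_segment_cases) (auto dest: monoD)
    then have "\<not> \<delta> K (- K)"
      using far_N far_Union quasi_proximity_empty[OF qp] by auto
    ultimately show ?thesis using quasi_proximity_mono[OF qp] by blast
  qed (simp add: quasi_proximity_empty[OF qp])
qed

section \<open>Admissibility\<close>

lemma pile_Image_distinct:
  fixes N :: "nat \<Rightarrow> 'a set"
  assumes "mono N" "Id \<subseteq> R" "R \<inter> U_rel N B \<subseteq> U_rel N A" "pile B H"
    and ij: "i \<in> H - A" "j \<in> H - A" "i < j"
    and x: "x \<in> N i" "\<And>k. k < i \<Longrightarrow> x \<notin> N k"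
    and y: "y \<in> N j" "\<And>k. k < j \<Longrightarrow> y \<notin> N k"
  shows "R `` {x} \<noteq> R `` {y}"
proof
  assume "R `` {x} = R `` {y}"
  then have "(x, y) \<in> R" using assms(2) by auto
  moreover have "y \<in> U_rel N B `` {x}"
    using Image_U_rel_cases[OF \<open>mono N\<close>, of B x]
  proof
    assume "\<exists>l. l \<notin> B \<and> x \<in> N l \<and> U_rel N B `` {x} = N l"
    then obtain l where l: "l \<notin> B" "x \<in> N l" "U_rel N B `` {x} = N l" by blast
    have "H \<subseteq> B" "nat_convex H" using \<open>pile B H\<close> unfolding pile_def by auto
    then have "l \<notin> H" "\<not> (i < l \<and> l < j)"
      using l(1) ij unfolding nat_convex_def by blast+
    moreover have "i \<le> l" using x(2) l(2) by (meson not_le)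
    ultimately have "j \<le> l" using ij by (metis DiffD1 le_neq_implies_less not_less)
    then show ?thesis using y(1) l(3) \<open>mono N\<close> by (auto dest: monoD)
  qed simp
  ultimately have "y \<in> U_rel N A `` {x}" using assms(3) by blast
  then have "y \<in> N i" using Image_U_rel_subset[of i A x N] ij(1) x(1) by blast
  then show False using y(2) ij(3) by blast
qed

text \<open>
  A pile may contain the index \<open>0\<close>, which has no point entering the chain there
  (\<open>N\<^sub>0\<close> may be empty); this costs the \<open>+ 1\<close> in the bound.
\<close>

lemma admissible_if_finite_images:
  fixes N :: "nat \<Rightarrow> 'a set"
  assumes strict: "\<And>i. N i \<subset> N (Suc i)" and "Id \<subseteq> R"
    and fin: "finite (range (\<lambda>x. R `` {x}))" and sub: "R \<inter> U_rel N B \<subseteq> U_rel N A"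
  shows "admissible B (B - A)"
  unfolding admissible_def
proof (intro exI allI impI)
  have mono: "mono N" unfolding mono_iff_le_Suc using strict by blast
  have "\<forall>i. \<exists>x. x \<in> N (Suc i) \<and> x \<notin> N i" using strict by blast
  then obtain p where p: "\<And>i. p i \<in> N (Suc i) \<and> p i \<notin> N i" by metis
  have p_enters: "p (i - 1) \<in> N i" "\<And>k. k < i \<Longrightarrow> p (i - 1) \<notin> N k" if "i \<noteq> 0" for i
  proof -
    show "p (i - 1) \<in> N i" using p[of "i - 1"] that by simp
    fix k assume "k < i"
    then have "N k \<subseteq> N (i - 1)" using monoD[OF mono] by simp
    then show "p (i - 1) \<notin> N k" using p[of "i - 1"] by blast
  qed
  fix H assume H: "pile B H"
  define Z where "Z = H \<inter> (B - A) - {0}"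
  define f where "f i = R `` {p (i - 1)}" for i
  have inj: "inj_on f Z"
  proof (rule linorder_inj_onI')
    fix i j assume "i \<in> Z" "j \<in> Z" "i < j"
    then have "i \<noteq> 0" "j \<noteq> 0" "i \<in> H - A" "j \<in> H - A" unfolding Z_def by auto
    then show "f i \<noteq> f j"
      unfolding f_def using pile_Image_distinct[OF mono \<open>Id \<subseteq> R\<close> sub H] \<open>i < j\<close> p_enters
      by blast
  qed
  have f_Z: "f ` Z \<subseteq> range (\<lambda>x. R `` {x})" unfolding f_def by blast
  have "finite Z" using inj_on_finite[OF inj f_Z fin] .
  have "card (H \<inter> (B - A)) \<le> card (insert 0 Z)"
    using \<open>finite Z\<close> unfolding Z_def by (intro card_mono) auto
  also have "\<dots> \<le> card Z + 1"
    by (simp add: card_insert_if \<open>finite Z\<close>)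
  also have "\<dots> \<le> card (range (\<lambda>x. R `` {x})) + 1"
    using card_inj_on_le[OF inj f_Z fin] by simp
  finally show "finite (H \<inter> (B - A)) \<and> card (H \<inter> (B - A)) \<le> card (range (\<lambda>x. R `` {x})) + 1"
    using \<open>finite Z\<close> finite_subset[of "H \<inter> (B - A)" "insert 0 Z"] unfolding Z_def by auto
qed

section \<open>The quasi-uniformities \<open>\<V>\<^sub>\<sigma>\<close>\<close>

lemma V_qp_subset_V_sigma: "V_qp \<delta> \<subseteq> V_sigma \<delta> N \<sigma>"
  unfolding V_sigma_def using gen_filter_subbase by blast

lemma U_rel_mem_V_sigma: "A \<in> \<sigma> \<Longrightarrow> U_rel N A \<in> V_sigma \<delta> N \<sigma>"
  unfolding V_sigma_def by (intro gen_filter_subbase) blast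

lemma V_sigma_basis:
  assumes qp: "quasi_proximity \<delta>" and \<sigma>: "nat_filter \<sigma>" and W: "W \<in> V_sigma \<delta> N \<sigma>"
  obtains V C where "V \<in> V_qp \<delta>" "C \<in> \<sigma>" "V \<inter> U_rel N C \<subseteq> W"
proof -
  let ?S = "{U_rel N A | A. A \<in> \<sigma>}"
  note qu = quasi_uniformity_V_qp[OF qp]
  have ne: "?S \<noteq> {}" using \<sigma> unfolding nat_filter_def by blast
  have dir: "\<exists>R\<in>?S. R \<subseteq> R1 \<inter> R2" if R: "R1 \<in> ?S" "R2 \<in> ?S" for R1 R2
  proof -
    obtain A1 A2 where "A1 \<in> \<sigma>" "A2 \<in> \<sigma>" "R1 = U_rel N A1" "R2 = U_rel N A2"
      using R by blast
    moreover from this have "A1 \<inter> A2 \<in> \<sigma>" using \<sigma> unfolding nat_filter_def by blast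
    ultimately show ?thesis using U_rel_mono[of "A1 \<inter> A2"] by blast
  qed
  have W': "W \<in> gen_filter (V_qp \<delta> \<union> ?S)" using W unfolding V_sigma_def .
  have "\<exists>V\<in>V_qp \<delta>. \<exists>R\<in>?S. V \<inter> R \<subseteq> W"
    by (rule gen_filter_Un_downward_directed[OF qu ne _ W']) (rule dir; assumption)
  then obtain V R where "V \<in> V_qp \<delta>" "R \<in> ?S" "V \<inter> R \<subseteq> W"
    by (elim bexE)
  moreover from \<open>R \<in> ?S\<close> obtain C where "C \<in> \<sigma>" "R = U_rel N C" by blast
  ultimately show ?thesis using that by simp
qed

lemma V_sigma_in_pi_qp_T_top:
  fixes N :: "nat \<Rightarrow> 'a set"
  assumes qp: "quasi_proximity \<delta>" and "qp_compatible \<delta> \<tau>" and trans: "transitive_qu (V_qp \<delta>)"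
    and "mono N" "\<And>j. \<not> \<delta> (N j) (- N j)" "\<not> \<delta> (\<Union>j. N j) (- (\<Union>j. N j))"
    and \<sigma>: "nat_filter \<sigma>"
  shows "V_sigma \<delta> N \<sigma> \<in> pi_qp \<delta> \<inter> T_top \<tau>"
proof -
  have "quasi_uniformity (V_sigma \<delta> N \<sigma>)"
    unfolding V_sigma_def using refl_U_rel trans_U_rel
    by (intro quasi_uniformity_gen_filter_Un_trans[OF quasi_uniformity_V_qp[OF qp]]) blast
  moreover have prox: "qu_proximity (V_sigma \<delta> N \<sigma>) = \<delta>"
  proof (rule qu_proximity_eqI)
    show "pervin_subbase \<delta> \<subseteq> V_sigma \<delta> N \<sigma>"
      using V_qp_eq_pervin[OF qp] gen_filter_subbase
      by (intro order_trans[OF _ V_qp_subset_V_sigma]) auto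
    fix W assume "W \<in> V_sigma \<delta> N \<sigma>"
    then obtain V C where "V \<in> V_qp \<delta>" "V \<inter> U_rel N C \<subseteq> W"
      using V_sigma_basis[OF qp \<sigma>] by metis
    moreover have "far_if_separated \<delta> (U_rel N C)"
      using far_if_separated_U_rel[OF qp assms(4-6)] .
    ultimately show "far_if_separated \<delta> W"
      using far_if_separated_gen_filter_pervin[OF qp] far_if_separated_mono
      unfolding V_qp_eq_pervin[OF qp] by blast
  qed
  moreover have "qu_compatible (V_sigma \<delta> N \<sigma>) \<tau>"
    using qu_compatible_if_qu_proximity_eq[OF prox assms(2)] .
  moreover have "transitive_qu (V_sigma \<delta> N \<sigma>)"
    unfolding transitive_qu_def
  proof
    fix W assume "W \<in> V_sigma \<delta> N \<sigma>"
    then obtain V C where "V \<in> V_qp \<delta>" "C \<in> \<sigma>" "V \<inter> U_rel N C \<subseteq> W"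
      by (rule V_sigma_basis[OF qp \<sigma>])
    moreover from this obtain V' where "V' \<in> V_qp \<delta>" "V' \<subseteq> V" "trans V'"
      using trans unfolding transitive_qu_def by blast
    ultimately have "V' \<inter> U_rel N C \<in> V_sigma \<delta> N \<sigma>" "V' \<inter> U_rel N C \<subseteq> W"
      "trans (V' \<inter> U_rel N C)"
      using V_qp_subset_V_sigma U_rel_mem_V_sigma gen_filter_Int trans_Int[OF _ trans_U_rel]
      unfolding V_sigma_def by blast+
    then show "\<exists>V\<in>V_sigma \<delta> N \<sigma>. V \<subseteq> W \<and> trans V" by blast
  qed
  ultimately show ?thesis unfolding pi_qp_def T_top_def by blast
qed

lemma mem_p_filter_if_U_rel_mem_V_sigma:
  fixes N :: "nat \<Rightarrow> 'a set"
  assumes qp: "quasi_proximity \<delta>" and strict: "\<And>i. N i \<subset> N (Suc i)"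
    and \<sigma>: "p_filter \<sigma>" and "U_rel N A \<in> V_sigma \<delta> N \<sigma>"
  shows "A \<in> \<sigma>"
proof -
  have nf: "nat_filter \<sigma>" using \<sigma> unfolding p_filter_def by blast
  obtain V B where "V \<in> V_qp \<delta>" "B \<in> \<sigma>" "V \<inter> U_rel N B \<subseteq> U_rel N A"
    using V_sigma_basis[OF qp nf assms(4)] by blast
  moreover from this obtain R where "R \<subseteq> V" "Id \<subseteq> R" "finite (range (\<lambda>x. R `` {x}))"
    using V_qp_finite_image_base[OF qp] by metis
  ultimately have "admissible B (B - A)"
    using admissible_if_finite_images[of N R B A] strict by blast
  then have "B - (B - A) \<in> \<sigma>"
    using \<sigma> \<open>B \<in> \<sigma>\<close> unfolding p_filter_def by blast
  then show ?thesis using nf unfolding nat_filter_def by blast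
qed

lemma subset_if_V_sigma_subset:
  fixes N :: "nat \<Rightarrow> 'a set"
  assumes "quasi_proximity \<delta>" "\<And>i. N i \<subset> N (Suc i)" "p_filter \<sigma>2"
    and "V_sigma \<delta> N \<sigma>1 \<subseteq> V_sigma \<delta> N \<sigma>2"
  shows "\<sigma>1 \<subseteq> \<sigma>2"
proof
  fix A assume "A \<in> \<sigma>1"
  then have "U_rel N A \<in> V_sigma \<delta> N \<sigma>2"
    using U_rel_mem_V_sigma assms(4) by blast
  then show "A \<in> \<sigma>2"
    using mem_p_filter_if_U_rel_mem_V_sigma[of \<delta> N \<sigma>2 A] assms(1-3) by blast
qed

theorem mainTheorem9:
  fixes \<tau> :: "'a topology"
    and \<delta> :: "'a set \<Rightarrow> 'a set \<Rightarrow> bool"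
    and N :: "nat \<Rightarrow> 'a set"
  assumes "topspace \<tau> = UNIV"
    and "quasi_proximity \<delta>"
    and "qp_compatible \<delta> \<tau>"
    and "transitive_qu (V_qp \<delta>)"
    and "\<And>i. N i \<in> B_qu \<tau> (V_qp \<delta>)"
    and "\<And>i. N i \<subset> N (Suc i)"
    and "(\<Union>i. N i) \<in> B_qu \<tau> (V_qp \<delta>)"
  shows "(\<forall>\<sigma>. p_filter \<sigma> \<longrightarrow> V_sigma \<delta> N \<sigma> \<in> pi_qp \<delta> \<inter> T_top \<tau>)
    \<and> (\<forall>\<sigma>1 \<sigma>2. p_filter \<sigma>1 \<longrightarrow> p_filter \<sigma>2 \<longrightarrow>
          V_sigma \<delta> N \<sigma>1 \<subseteq> V_sigma \<delta> N \<sigma>2 \<longrightarrow> \<sigma>1 \<subseteq> \<sigma>2)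
    \<and> inj_on (V_sigma \<delta> N) {\<sigma>. p_filter \<sigma>}"
proof -
  have "mono N" unfolding mono_iff_le_Suc using assms(6) by blast
  have far_N: "\<And>j. \<not> \<delta> (N j) (- N j)" and far_Union: "\<not> \<delta> (\<Union>j. N j) (- (\<Union>j. N j))"
    using far_compl_if_mem_B_qu[OF assms(2)] assms(5,7) by blast+
  have in_pi_T: "V_sigma \<delta> N \<sigma> \<in> pi_qp \<delta> \<inter> T_top \<tau>" if "p_filter \<sigma>" for \<sigma>
    using V_sigma_in_pi_qp_T_top[OF assms(2-4) \<open>mono N\<close> far_N far_Union] that
    unfolding p_filter_def by blast
  have reflects: "\<sigma>1 \<subseteq> \<sigma>2" if "p_filter \<sigma>2" "V_sigma \<delta> N \<sigma>1 \<subseteq> V_sigma \<delta> N \<sigma>2" for \<sigma>1 \<sigma>2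
    using subset_if_V_sigma_subset[of \<delta> N \<sigma>2 \<sigma>1] assms(2,6) that by blast
  show ?thesis
    using in_pi_T reflects by (auto intro!: inj_onI subset_antisym)
qed

end
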